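(* Let $N\ge 1$ and $S_1,\dots,S_N\ge 1$. Consider an $S_1\times\cdots\times S_N$-setting $N$-partite correlation experiment in which party $n$ performs measurements $s_n\in\{1,\dots,S_n\}$ with outcomes $\lambda_n^{(s_n)}$ in a measurable space $\Lambda_n^{(s_n)}$ (of any type, discrete or continuous), described by joint probability distributions $P_{(s_1,\dots,s_N)}$ on $\Lambda_1^{(s_1)}\times\cdots\times\Lambda_N^{(s_N)}$, and suppose the experiment admits an LHV model (conditional or unconditional). Write $\lambda_n=(\lambda_n^{(1)},\dots,\lambda_n^{(S_n)})$ and $\Lambda_n=\Lambda_n^{(1)}\times\cdots\times\Lambda_n^{(S_n)}$. (i) For any collection $\{\Psi_{(s_1,\dots,s_N)}\}$ of bounded measurable real-valued functions, $\Psi_{(s_1,\dots,s_N)}$ defined on $\Lambda_1^{(s_1)}\times\cdots\times\Lambda_N^{(s_N)}$, the following tight linear LHV constraint holds: $$\inf_{\lambda_1\in\Lambda_1,\dots,\lambda_N\in\Lambda_N}\sum_{s_1,\dots,s_N}\Psi_{(s_1,\dots,s_N)}(\lambda_1^{(s_1)},\dots,\lambda_N^{(s_N)})\le\sum_{s_1,\dots,s_N}\big\langle\Psi_{(s_1,\dots,s_N)}(\lambda_1^{(s_1)},\dots,\lambda_N^{(s_N)})\big\rangle_{LHV}\le\sup_{\lambda_1\in\Lambda_1,\dots,\lambda_N\in\Lambda_N}\sum_{s_1,\dots,s_N}\Psi_{(s_1,\dots,s_N)}(\lambda_1^{(s_1)},\dots,\lambda_N^{(s_N)}).$$ (ii)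 In particular, for any bounded measurable real-valued functions $\phi_n^{(s_n)}$ on $\Lambda_n^{(s_n)}$ (all $s_n$, $n$) and any real coefficients $\gamma_{(s_1,\dots,s_N)}$, the tight linear LHV constraint $$\inf_{\xi_1\in\Phi_1,\dots,\xi_N\in\Phi_N}F_N^{(\gamma)}(\xi_1,\dots,\xi_N)\le\sum_{s_1,\dots,s_N}\gamma_{(s_1,\dots,s_N)}\big\langle\phi_1^{(s_1)}(\lambda_1^{(s_1)})\cdots\phi_N^{(s_N)}(\lambda_N^{(s_N)})\big\rangle_{LHV}\le\sup_{\xi_1\in\Phi_1,\dots,\xi_N\in\Phi_N}F_N^{(\gamma)}(\xi_1,\dots,\xi_N)$$ holds, where $F_N^{(\gamma)}(\xi_1,\dots,\xi_N)=\sum_{s_1,\dots,s_N}\gamma_{(s_1,\dots,s_N)}\,\xi_1^{(s_1)}\cdots\xi_N^{(s_N)}$ is the $N$-linear form of vectors $\xi_n=(\xi_n^{(1)},\dots,\xi_n^{(S_n)})\in\mathbb{R}^{S_n}$, and $\Phi_n=\{\xi_n\in\mathbb{R}^{S_n}:\ \xi_n^{(s_n)}=\phi_n^{(s_n)}(\lambda_n^{(s_n)}),\ \lambda_n^{(s_n)}\in\Lambda_n^{(s_n)},\ s_n=1,\dots,S_n\}$.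
   Context: All sums over $s_n$ range over $1,\dots,S_n$. For a joint measurement $(s_1,\dots,s_N)$ and a bounded measurable real function $\Psi$, $\langle\Psi(\lambda_1^{(s_1)},\dots,\lambda_N^{(s_N)})\rangle=\int\Psi\,dP_{(s_1,\dots,s_N)}$; the subscript LHV indicates the experiment admits an LHV model. The experiment admitting an LHV model (conditional or unconditional) is characterized by the existence of a probability measure $\mu$ on $\Lambda_1\times\cdots\times\Lambda_N$ (joint distribution of all outcomes of all measurements at all sites) such that every $P_{(s_1,\dots,s_N)}$ is the marginal of $\mu$ on the coordinates $(\lambda_1^{(s_1)},\dots,\lambda_N^{(s_N)})$. A linear LHV constraint is called tight if, within the class of experiments (with the given outcome sets) admitting an LHV model, its bounds cannot be improved. *)

theory Defs
  imports "HOL-Probability.Probability"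
begin

text \<open>Conventions: parties are indexed by n < N, the settings of party n by s < S n
(0-based). The outcome space of measurement s of party n is the measurable space M n s.\<close>

definition settings :: "nat \<Rightarrow> (nat \<Rightarrow> nat) \<Rightarrow> (nat \<Rightarrow> nat) set" where
  "settings N S = PiE {..<N} (\<lambda>n. {..<S n})"

definition idx :: "nat \<Rightarrow> (nat \<Rightarrow> nat) \<Rightarrow> (nat \<times> nat) set" where
  "idx N S = Sigma {..<N} (\<lambda>n. {..<S n})"

definition joint_space ::
  "(nat \<Rightarrow> nat \<Rightarrow> 'a measure) \<Rightarrow> nat \<Rightarrow> (nat \<Rightarrow> nat) \<Rightarrow> ((nat \<times> nat) \<Rightarrow> 'a) measure" where
  "joint_space M N S = PiM (idx N S) (\<lambda>(n, s). M n s)"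

definition meas_space ::
  "(nat \<Rightarrow> nat \<Rightarrow> 'a measure) \<Rightarrow> nat \<Rightarrow> (nat \<Rightarrow> nat) \<Rightarrow> (nat \<Rightarrow> 'a) measure" where
  "meas_space M N sv = PiM {..<N} (\<lambda>n. M n (sv n))"

definition select :: "nat \<Rightarrow> (nat \<Rightarrow> nat) \<Rightarrow> ((nat \<times> nat) \<Rightarrow> 'a) \<Rightarrow> (nat \<Rightarrow> 'a)" where
  "select N sv \<omega> = (\<lambda>n\<in>{..<N}. \<omega> (n, sv n))"

definition lhv_model ::
  "(nat \<Rightarrow> nat \<Rightarrow> 'a measure) \<Rightarrow> nat \<Rightarrow> (nat \<Rightarrow> nat) \<Rightarrow> ((nat \<Rightarrow> nat) \<Rightarrow> (nat \<Rightarrow> 'a) measure) \<Rightarrow> bool" where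
  "lhv_model M N S P \<longleftrightarrow>
     (\<exists>\<mu>. prob_space \<mu> \<and> sets \<mu> = sets (joint_space M N S) \<and>
          (\<forall>sv\<in>settings N S. P sv = distr \<mu> (meas_space M N sv) (select N sv)))"

definition lhv_sum ::
  "nat \<Rightarrow> (nat \<Rightarrow> nat) \<Rightarrow> ((nat \<Rightarrow> nat) \<Rightarrow> (nat \<Rightarrow> 'a) measure) \<Rightarrow> ((nat \<Rightarrow> nat) \<Rightarrow> (nat \<Rightarrow> 'a) \<Rightarrow> real) \<Rightarrow> real" where
  "lhv_sum N S P \<Psi> = (\<Sum>sv\<in>settings N S. \<integral>x. \<Psi> sv x \<partial>P sv)"

definition det_sum ::
  "nat \<Rightarrow> (nat \<Rightarrow> nat) \<Rightarrow> ((nat \<Rightarrow> nat) \<Rightarrow> (nat \<Rightarrow> 'a) \<Rightarrow> real) \<Rightarrow> ((nat \<times> nat) \<Rightarrow> 'a) \<Rightarrow> real" where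
  "det_sum N S \<Psi> \<omega> = (\<Sum>sv\<in>settings N S. \<Psi> sv (select N sv \<omega>))"

definition Phi ::
  "(nat \<Rightarrow> nat \<Rightarrow> 'a measure) \<Rightarrow> (nat \<Rightarrow> nat) \<Rightarrow> (nat \<Rightarrow> nat \<Rightarrow> 'a \<Rightarrow> real) \<Rightarrow> nat \<Rightarrow> (nat \<Rightarrow> real) set" where
  "Phi M S \<phi> n = (\<lambda>l. \<lambda>s\<in>{..<S n}. \<phi> n s (l s)) ` space (PiM {..<S n} (M n))"

definition F_form ::
  "nat \<Rightarrow> (nat \<Rightarrow> nat) \<Rightarrow> ((nat \<Rightarrow> nat) \<Rightarrow> real) \<Rightarrow> (nat \<Rightarrow> nat \<Rightarrow> real) \<Rightarrow> real" where
  "F_form N S \<gamma> \<xi> = (\<Sum>sv\<in>settings N S. \<gamma> sv * (\<Prod>n<N. \<xi> n (sv n)))"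

definition corr_sum ::
  "nat \<Rightarrow> (nat \<Rightarrow> nat) \<Rightarrow> ((nat \<Rightarrow> nat) \<Rightarrow> (nat \<Rightarrow> 'a) measure) \<Rightarrow> (nat \<Rightarrow> nat \<Rightarrow> 'a \<Rightarrow> real)
     \<Rightarrow> ((nat \<Rightarrow> nat) \<Rightarrow> real) \<Rightarrow> real" where
  "corr_sum N S P \<phi> \<gamma> =
     (\<Sum>sv\<in>settings N S. \<gamma> sv * (\<integral>x. (\<Prod>n<N. \<phi> n (sv n) (x n)) \<partial>P sv))"

end

theory Submission imports Defs begin

text \<open>Every LHV experiment is a mixture, with weights \<mu>, of deterministic experiments, one for
each point \<omega> of the joint outcome space; the functional is linear, so its value is the
\<mu>-average of its values det_sum \<omega> at these points and lies between their infimum and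
supremum. Conversely every deterministic experiment (\<mu> a Dirac measure) is an LHV model, so
both bounds are attained or approached. For product correlations, det_sum at \<omega> is the
multilinear form F evaluated at the vectors \<xi>_n = (\<phi>_n^(s)(\<omega>(n,s)))_s, and these
vectors range exactly over \<Phi>_1 \<times> \<dots> \<times> \<Phi>_N.\<close>

lemma cInf_cSup_eq_of_between:
  fixes X D :: "'a::conditionally_complete_linorder set"
  assumes "D \<subseteq> X" "bdd_above D" "bdd_below D"
    and between: "\<forall>x\<in>X. Inf D \<le> x \<and> x \<le> Sup D"
    and "D = {} \<Longrightarrow> X = {}"
  shows "Inf X = Inf D \<and> Sup X = Sup D"
proof (cases "D = {}")
  case True
  then show ?thesis using assms by simp
next
  case False
  then have X: "X \<noteq> {}" using assms(1) by auto
  have bX: "bdd_below X" "bdd_above X"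
    using between unfolding bdd_below_def bdd_above_def by auto
  have "Inf D \<le> Inf X" by (rule cInf_greatest[OF X]) (use between in auto)
  moreover have "Inf X \<le> Inf D"
    by (rule cInf_greatest[OF False]) (use assms(1) bX in \<open>auto intro: cInf_lower\<close>)
  moreover have "Sup X \<le> Sup D" by (rule cSup_least[OF X]) (use between in auto)
  moreover have "Sup D \<le> Sup X"
    by (rule cSup_least[OF False]) (use assms(1) bX in \<open>auto intro: cSup_upper\<close>)
  ultimately show ?thesis by auto
qed

lemma (in prob_space) integral_between_Inf_Sup:
  fixes f :: "'a \<Rightarrow> real"
  assumes f: "f \<in> borel_measurable M" and bound: "\<forall>x\<in>space M. \<bar>f x\<bar> \<le> B"
  shows "Inf (f ` space M) \<le> integral\<^sup>L M f \<and> integral\<^sup>L M f \<le> Sup (f ` space M)"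
proof -
  have int: "integrable M f" by (rule integrable_const_bound[of _ B]) (use f bound in auto)
  have "bdd_above (f ` space M)" "bdd_below (f ` space M)"
    using bound by (auto intro!: bdd_aboveI2[where M=B] bdd_belowI2[where m="- B"] simp: abs_le_iff)
  then show ?thesis
    by (intro conjI integral_ge_const[OF int] integral_le_const[OF int] AE_I2)
      (auto intro: cSup_upper cInf_lower)
qed

lemma settings_component_less:
  "sv \<in> settings N S \<Longrightarrow> n < N \<Longrightarrow> sv n < S n"
  by (auto simp: settings_def PiE_def Pi_def)

lemma measurable_select:
  assumes sv: "sv \<in> settings N S"
  shows "select N sv \<in> measurable (joint_space M N S) (meas_space M N sv)"
  unfolding select_def meas_space_def joint_space_def
proof (rule measurable_restrict)
  fix n assume "n \<in> {..<N}"
  then have "(n, sv n) \<in> idx N S" using sv by (auto simp: idx_def settings_component_less)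
  from measurable_component_singleton[OF this, of "\<lambda>(n, s). M n s"]
  show "(\<lambda>\<omega>. \<omega> (n, sv n)) \<in> Pi\<^sub>M (idx N S) (\<lambda>(n, s). M n s) \<rightarrow>\<^sub>M M n (sv n)" by simp
qed

lemma lhv_model_joint_space_nonempty:
  assumes "lhv_model M N S P"
  shows "space (joint_space M N S) \<noteq> {}"
proof -
  obtain \<mu> where "prob_space \<mu>" "sets \<mu> = sets (joint_space M N S)"
    using assms unfolding lhv_model_def by blast
  then show ?thesis using prob_space.not_empty sets_eq_imp_space_eq by metis
qed

context
  fixes N :: nat and S :: "nat \<Rightarrow> nat" and M :: "nat \<Rightarrow> nat \<Rightarrow> 'a measure"
    and \<Psi> :: "(nat \<Rightarrow> nat) \<Rightarrow> (nat \<Rightarrow> 'a) \<Rightarrow> real"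
  assumes \<Psi>_meas: "\<forall>sv\<in>settings N S. \<Psi> sv \<in> borel_measurable (meas_space M N sv)"
begin

lemma measurable_\<Psi>_select:
  "sv \<in> settings N S \<Longrightarrow> (\<lambda>\<omega>. \<Psi> sv (select N sv \<omega>)) \<in> borel_measurable (joint_space M N S)"
  using measurable_comp[OF measurable_select \<Psi>_meas[rule_format]] by (simp add: o_def)

lemma det_sum_measurable: "det_sum N S \<Psi> \<in> borel_measurable (joint_space M N S)"
  unfolding det_sum_def[abs_def] using measurable_\<Psi>_select by auto

lemma lhv_sum_return:
  assumes \<omega>: "\<omega> \<in> space (joint_space M N S)"
  defines "P \<equiv> \<lambda>sv. distr (return (joint_space M N S) \<omega>) (meas_space M N sv) (select N sv)"
  shows "lhv_model M N S P" and "lhv_sum N S P \<Psi> = det_sum N S \<Psi> \<omega>"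
proof -
  show "lhv_model M N S P"
    unfolding lhv_model_def P_def
    by (rule exI[of _ "return (joint_space M N S) \<omega>"]) (use \<omega> in \<open>auto intro: prob_space_return\<close>)
  have "(\<integral>x. \<Psi> sv x \<partial>P sv) = \<Psi> sv (select N sv \<omega>)" if sv: "sv \<in> settings N S" for sv
  proof -
    have "select N sv \<in> measurable (return (joint_space M N S) \<omega>) (meas_space M N sv)"
      using measurable_select[OF sv] by (simp add: measurable_cong_sets[OF sets_return refl])
    from integral_distr[OF this \<Psi>_meas[rule_format, OF sv]]
    show ?thesis
      unfolding P_def using integral_return[OF \<omega> measurable_\<Psi>_select[OF sv]] by simp
  qed
  then show "lhv_sum N S P \<Psi> = det_sum N S \<Psi> \<omega>"
    unfolding lhv_sum_def det_sum_def by simp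
qed

context
  fixes B :: "(nat \<Rightarrow> nat) \<Rightarrow> real"
  assumes \<Psi>_bound: "\<forall>sv\<in>settings N S. \<forall>x\<in>space (meas_space M N sv). \<bar>\<Psi> sv x\<bar> \<le> B sv"
begin

lemma det_sum_bound:
  assumes "\<omega> \<in> space (joint_space M N S)"
  shows "\<bar>det_sum N S \<Psi> \<omega>\<bar> \<le> (\<Sum>sv\<in>settings N S. B sv)"
proof -
  have "select N sv \<omega> \<in> space (meas_space M N sv)" if "sv \<in> settings N S" for sv
    using measurable_space[OF measurable_select[OF that] assms] .
  then show ?thesis
    unfolding det_sum_def by (intro order_trans[OF sum_abs sum_mono]) (use \<Psi>_bound in auto)
qed

lemma lhv_sum_eq_integral_det_sum:
  assumes \<mu>: "prob_space \<mu>" "sets \<mu> = sets (joint_space M N S)"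
    and P: "\<forall>sv\<in>settings N S. P sv = distr \<mu> (meas_space M N sv) (select N sv)"
  shows "lhv_sum N S P \<Psi> = (\<integral>\<omega>. det_sum N S \<Psi> \<omega> \<partial>\<mu>)"
proof -
  interpret prob_space \<mu> by fact
  note \<mu>_meas = measurable_cong_sets[OF \<mu>(2) refl]
  have space_\<mu>: "space \<mu> = space (joint_space M N S)" using \<mu>(2) by (rule sets_eq_imp_space_eq)
  have int: "integrable \<mu> (\<lambda>\<omega>. \<Psi> sv (select N sv \<omega>))" if sv: "sv \<in> settings N S" for sv
  proof (rule integrable_const_bound[where B="B sv"])
    show "AE \<omega> in \<mu>. norm (\<Psi> sv (select N sv \<omega>)) \<le> B sv"
      by (intro AE_I2) (use \<Psi>_bound measurable_space[OF measurable_select[OF sv]] sv space_\<mu> in auto)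
  qed (use measurable_\<Psi>_select[OF sv] in \<open>simp add: \<mu>_meas\<close>)
  have "(\<integral>x. \<Psi> sv x \<partial>P sv) = (\<integral>\<omega>. \<Psi> sv (select N sv \<omega>) \<partial>\<mu>)" if sv: "sv \<in> settings N S" for sv
  proof -
    have "select N sv \<in> \<mu> \<rightarrow>\<^sub>M meas_space M N sv"
      using measurable_select[OF sv] by (simp add: \<mu>_meas)
    from integral_distr[OF this \<Psi>_meas[rule_format, OF sv]] show ?thesis using P sv by simp
  qed
  then have "lhv_sum N S P \<Psi> = (\<Sum>sv\<in>settings N S. \<integral>\<omega>. \<Psi> sv (select N sv \<omega>) \<partial>\<mu>)"
    unfolding lhv_sum_def by simp
  also have "\<dots> = (\<integral>\<omega>. det_sum N S \<Psi> \<omega> \<partial>\<mu>)"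
    unfolding det_sum_def using int by (simp add: Bochner_Integration.integral_sum)
  finally show ?thesis .
qed

lemma lhv_sum_between_Inf_Sup:
  assumes "lhv_model M N S P"
  shows "Inf (det_sum N S \<Psi> ` space (joint_space M N S)) \<le> lhv_sum N S P \<Psi> \<and>
         lhv_sum N S P \<Psi> \<le> Sup (det_sum N S \<Psi> ` space (joint_space M N S))"
proof -
  obtain \<mu> where \<mu>: "prob_space \<mu>" "sets \<mu> = sets (joint_space M N S)"
    and P: "\<forall>sv\<in>settings N S. P sv = distr \<mu> (meas_space M N sv) (select N sv)"
    using assms unfolding lhv_model_def by blast
  have space_\<mu>: "space \<mu> = space (joint_space M N S)" using \<mu>(2) by (rule sets_eq_imp_space_eq)
  have "det_sum N S \<Psi> \<in> borel_measurable \<mu>"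
    using det_sum_measurable by (simp add: measurable_cong_sets[OF \<mu>(2) refl])
  from prob_space.integral_between_Inf_Sup[OF \<mu>(1) this] det_sum_bound
  show ?thesis
    unfolding lhv_sum_eq_integral_det_sum[OF \<mu> P] space_\<mu> by blast
qed

lemma lhv_sum_tight_bounds:
  "(\<forall>P. lhv_model M N S P \<longrightarrow>
      Inf (det_sum N S \<Psi> ` space (joint_space M N S)) \<le> lhv_sum N S P \<Psi> \<and>
      lhv_sum N S P \<Psi> \<le> Sup (det_sum N S \<Psi> ` space (joint_space M N S)))
   \<and> Inf {lhv_sum N S P \<Psi> | P. lhv_model M N S P} = Inf (det_sum N S \<Psi> ` space (joint_space M N S))
   \<and> Sup {lhv_sum N S P \<Psi> | P. lhv_model M N S P} = Sup (det_sum N S \<Psi> ` space (joint_space M N S))"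
proof -
  let ?D = "det_sum N S \<Psi> ` space (joint_space M N S)"
  let ?X = "{lhv_sum N S P \<Psi> | P. lhv_model M N S P}"
  have "?D \<subseteq> ?X"
  proof
    fix y assume "y \<in> ?D"
    then obtain \<omega> where \<omega>: "\<omega> \<in> space (joint_space M N S)" and y: "y = det_sum N S \<Psi> \<omega>"
      by blast
    show "y \<in> ?X" using lhv_sum_return[OF \<omega>] unfolding y by (intro CollectI exI conjI) (rule sym)
  qed
  moreover have "bdd_above ?D" "bdd_below ?D"
    using det_sum_bound
    by (auto intro!: bdd_aboveI2[where M="\<Sum>sv\<in>settings N S. B sv"]
        bdd_belowI2[where m="- (\<Sum>sv\<in>settings N S. B sv)"] simp: abs_le_iff minus_le_iff)
  moreover have "?D = {} \<Longrightarrow> ?X = {}" using lhv_model_joint_space_nonempty by blast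
  ultimately have "Inf ?X = Inf ?D \<and> Sup ?X = Sup ?D"
    using cInf_cSup_eq_of_between[of ?D ?X] lhv_sum_between_Inf_Sup by blast
  then show ?thesis using lhv_sum_between_Inf_Sup by blast
qed

end

end

definition corr_integrand ::
  "nat \<Rightarrow> (nat \<Rightarrow> nat \<Rightarrow> 'a \<Rightarrow> real) \<Rightarrow> ((nat \<Rightarrow> nat) \<Rightarrow> real) \<Rightarrow> (nat \<Rightarrow> nat) \<Rightarrow> (nat \<Rightarrow> 'a) \<Rightarrow> real"
  where "corr_integrand N \<phi> \<gamma> sv x = \<gamma> sv * (\<Prod>n<N. \<phi> n (sv n) (x n))"

lemma corr_sum_eq_lhv_sum: "corr_sum N S P \<phi> \<gamma> = lhv_sum N S P (corr_integrand N \<phi> \<gamma>)"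
  unfolding corr_sum_def lhv_sum_def corr_integrand_def by simp

lemma corr_integrand_measurable:
  assumes \<phi>_meas: "\<forall>n<N. \<forall>s<S n. \<phi> n s \<in> borel_measurable (M n s)"
    and sv: "sv \<in> settings N S"
  shows "corr_integrand N \<phi> \<gamma> sv \<in> borel_measurable (meas_space M N sv)"
proof -
  have "(\<lambda>x. \<phi> n (sv n) (x n)) \<in> borel_measurable (meas_space M N sv)" if n: "n \<in> {..<N}" for n
  proof -
    have "(\<lambda>x. x n) \<in> measurable (meas_space M N sv) (M n (sv n))"
      unfolding meas_space_def using measurable_component_singleton[OF n] .
    from measurable_comp[OF this \<phi>_meas[rule_format, OF _ settings_component_less[OF sv]]] n
    show ?thesis by (simp add: o_def)
  qed
  then show ?thesis unfolding corr_integrand_def by auto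
qed

lemma corr_integrand_bound:
  assumes C: "\<forall>n<N. \<forall>s<S n. \<forall>y\<in>space (M n s). \<bar>\<phi> n s y\<bar> \<le> C n s"
    and sv: "sv \<in> settings N S" and x: "x \<in> space (meas_space M N sv)"
  shows "\<bar>corr_integrand N \<phi> \<gamma> sv x\<bar> \<le> \<bar>\<gamma> sv\<bar> * (\<Prod>n<N. C n (sv n))"
proof -
  have "x n \<in> space (M n (sv n))" if "n < N" for n
    using x that unfolding meas_space_def space_PiM by auto
  then have "\<bar>\<Prod>n<N. \<phi> n (sv n) (x n)\<bar> \<le> (\<Prod>n<N. C n (sv n))"
    unfolding abs_prod by (intro prod_mono) (use C settings_component_less[OF sv] in auto)
  then show ?thesis unfolding corr_integrand_def abs_mult by (simp add: mult_left_mono)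
qed

lemma det_sum_corr_integrand:
  assumes "\<forall>n<N. \<forall>s<S n. \<xi> n s = \<phi> n s (\<omega> (n, s))"
  shows "det_sum N S (corr_integrand N \<phi> \<gamma>) \<omega> = F_form N S \<gamma> \<xi>"
  unfolding det_sum_def F_form_def corr_integrand_def select_def
  by (intro sum.cong refl arg_cong2[where f="(*)"] prod.cong) (use assms settings_component_less in auto)

lemma F_form_image_Phi:
  "F_form N S \<gamma> ` PiE {..<N} (Phi M S \<phi>) = det_sum N S (corr_integrand N \<phi> \<gamma>) ` space (joint_space M N S)"
proof (intro equalityI subsetI)
  fix y assume "y \<in> F_form N S \<gamma> ` PiE {..<N} (Phi M S \<phi>)"
  then obtain \<xi> where \<xi>: "\<xi> \<in> PiE {..<N} (Phi M S \<phi>)" and y: "y = F_form N S \<gamma> \<xi>" by auto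
  have "\<forall>n\<in>{..<N}. \<exists>l. l \<in> space (PiM {..<S n} (M n)) \<and> \<xi> n = (\<lambda>s\<in>{..<S n}. \<phi> n s (l s))"
    using \<xi> unfolding Phi_def by (auto simp: PiE_def Pi_def)
  then obtain L where L: "\<forall>n\<in>{..<N}. L n \<in> space (PiM {..<S n} (M n)) \<and> \<xi> n = (\<lambda>s\<in>{..<S n}. \<phi> n s (L n s))"
    by metis
  define \<omega> where "\<omega> = (\<lambda>(n, s). if (n, s) \<in> idx N S then L n s else undefined)"
  have "\<omega> \<in> space (joint_space M N S)"
    using L unfolding joint_space_def space_PiM \<omega>_def
    by (auto simp: idx_def PiE_def Pi_def extensional_def)
  moreover have "y = det_sum N S (corr_integrand N \<phi> \<gamma>) \<omega>"
    unfolding y by (rule det_sum_corr_integrand[symmetric]) (use L in \<open>auto simp: \<omega>_def idx_def\<close>)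
  ultimately show "y \<in> det_sum N S (corr_integrand N \<phi> \<gamma>) ` space (joint_space M N S)" by blast
next
  fix y assume "y \<in> det_sum N S (corr_integrand N \<phi> \<gamma>) ` space (joint_space M N S)"
  then obtain \<omega> where \<omega>: "\<omega> \<in> space (joint_space M N S)"
    and y: "y = det_sum N S (corr_integrand N \<phi> \<gamma>) \<omega>" by auto
  define \<xi> where "\<xi> = (\<lambda>n\<in>{..<N}. \<lambda>s\<in>{..<S n}. \<phi> n s (\<omega> (n, s)))"
  have "\<xi> n \<in> Phi M S \<phi> n" if n: "n < N" for n
  proof -
    have "(\<lambda>s\<in>{..<S n}. \<omega> (n, s)) \<in> space (PiM {..<S n} (M n))"
      using \<omega> n unfolding joint_space_def space_PiM by (auto simp: idx_def PiE_def Pi_def)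
    then show ?thesis unfolding Phi_def \<xi>_def using n by (auto intro!: image_eqI[where x="\<lambda>s\<in>{..<S n}. \<omega> (n, s)"])
  qed
  then have "\<xi> \<in> PiE {..<N} (Phi M S \<phi>)" unfolding \<xi>_def by auto
  moreover have "y = F_form N S \<gamma> \<xi>"
    unfolding y by (rule det_sum_corr_integrand) (auto simp: \<xi>_def)
  ultimately show "y \<in> F_form N S \<gamma> ` PiE {..<N} (Phi M S \<phi>)" by blast
qed

theorem theorem1:
  fixes N :: nat and S :: "nat \<Rightarrow> nat" and M :: "nat \<Rightarrow> nat \<Rightarrow> 'a measure"
    and \<Psi> :: "(nat \<Rightarrow> nat) \<Rightarrow> (nat \<Rightarrow> 'a) \<Rightarrow> real"
    and \<phi> :: "nat \<Rightarrow> nat \<Rightarrow> 'a \<Rightarrow> real" and \<gamma> :: "(nat \<Rightarrow> nat) \<Rightarrow> real"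
  assumes "N \<ge> 1" and "\<forall>n<N. S n \<ge> 1"
    and \<Psi>_meas: "\<forall>sv\<in>settings N S. \<Psi> sv \<in> borel_measurable (meas_space M N sv)"
    and \<Psi>_bdd: "\<forall>sv\<in>settings N S. \<exists>B. \<forall>x\<in>space (meas_space M N sv). \<bar>\<Psi> sv x\<bar> \<le> B"
    and \<phi>_meas: "\<forall>n<N. \<forall>s<S n. \<phi> n s \<in> borel_measurable (M n s)"
    and \<phi>_bdd: "\<forall>n<N. \<forall>s<S n. \<exists>B. \<forall>x\<in>space (M n s). \<bar>\<phi> n s x\<bar> \<le> B"
  shows
    \<comment> \<open>(i): the bounds hold for every LHV experiment ...\<close>
    "(\<forall>P. lhv_model M N S P \<longrightarrow>
        Inf (det_sum N S \<Psi> ` space (joint_space M N S)) \<le> lhv_sum N S P \<Psi> \<and>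
        lhv_sum N S P \<Psi> \<le> Sup (det_sum N S \<Psi> ` space (joint_space M N S)))
     \<comment> \<open>... and are tight\<close>
     \<and> Inf {lhv_sum N S P \<Psi> | P. lhv_model M N S P} = Inf (det_sum N S \<Psi> ` space (joint_space M N S))
     \<and> Sup {lhv_sum N S P \<Psi> | P. lhv_model M N S P} = Sup (det_sum N S \<Psi> ` space (joint_space M N S))
     \<comment> \<open>(ii): product correlation functionals\<close>
     \<and> (\<forall>P. lhv_model M N S P \<longrightarrow>
        Inf (F_form N S \<gamma> ` PiE {..<N} (Phi M S \<phi>)) \<le> corr_sum N S P \<phi> \<gamma> \<and>
        corr_sum N S P \<phi> \<gamma> \<le> Sup (F_form N S \<gamma> ` PiE {..<N} (Phi M S \<phi>)))
     \<and> Inf {corr_sum N S P \<phi> \<gamma> | P. lhv_model M N S P} = Inf (F_form N S \<gamma> ` PiE {..<N} (Phi M S \<phi>))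
     \<and> Sup {corr_sum N S P \<phi> \<gamma> | P. lhv_model M N S P} = Sup (F_form N S \<gamma> ` PiE {..<N} (Phi M S \<phi>))"
proof -
  obtain B where B: "\<forall>sv\<in>settings N S. \<forall>x\<in>space (meas_space M N sv). \<bar>\<Psi> sv x\<bar> \<le> B sv"
    using \<Psi>_bdd by metis
  obtain C where C: "\<forall>n<N. \<forall>s<S n. \<forall>x\<in>space (M n s). \<bar>\<phi> n s x\<bar> \<le> C n s"
    using \<phi>_bdd by metis
  show ?thesis
    using lhv_sum_tight_bounds[OF \<Psi>_meas B]
      lhv_sum_tight_bounds[where \<Psi>="corr_integrand N \<phi> \<gamma>" and B="\<lambda>sv. \<bar>\<gamma> sv\<bar> * (\<Prod>n<N. C n (sv n))"]
      corr_integrand_measurable[OF \<phi>_meas] corr_integrand_bound[OF C]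
    unfolding corr_sum_eq_lhv_sum F_form_image_Phi by blast
qed

end
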